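(* Let $(X,d)$ be a compact metric space and let $\mathcal{F}=\{X; f_{\lambda}\mid\lambda\in\Lambda\}$ be an iterated function system in which every $f_\lambda:X\to X$ is continuous and surjective. If $\mathcal{F}$ has the average shadowing property, then every point $x\in X$ is a chain recurrent point of $\mathcal{F}$; moreover, $\mathcal{F}$ has only one chain component, namely the whole space, i.e. for every $x,y\in X$ and every $\epsilon>0$ there exists an $\epsilon$-chain of $\mathcal{F}$ from $x$ to $y$.
   Context: An iterated function system (IFS) $\mathcal{F}=\{X; f_{\lambda}\mid\lambda\in\Lambda\}$ on a metric space $(X,d)$ is a family of continuous maps $f_\lambda:X\to X$ indexed by a finite nonempty set $\Lambda$. For $\sigma=(\lambda_0,\lambda_1,\dots)\in\Lambda^{\mathbb{Z}_+}$ write $\mathcal{F}_{\sigma_n}=f_{\lambda_{n-1}}\circ\cdots\circ f_{\lambda_0}$ for $n\ge1$ and $\mathcal{F}_{\sigma_0}=\mathrm{id}_X$. For $\delta>0$, a sequence $(x_i)_{i\ge0}$ in $X$ is a $\delta$-average pseudo-orbit of $\mathcal{F}$ if there exist a natural number $N$ and $\sigma=(\lambda_0,\lambda_1,\dots)\in\Lambda^{\mathbb{Z}_+}$ such that for all $n\ge N$, $\frac1n\sum_{i=0}^{n-1}d(f_{\lambda_i}(x_i),x_{i+1})<\delta$. A sequence $(x_i)_{i\ge0}$ is $\epsilon$-shadowed in average by $z\in X$ if there exists $\sigma\in\Lambda^{\mathbb{Z}_+}$ with $\limsup_{n\to\infty}\frac1n\sum_{i=0}^{n-1}d(\mathcal{F}_{\sigma_i}(z),x_i)<\epsilon$.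 $\mathcal{F}$ has the average shadowing property if for every $\epsilon>0$ there is $\delta>0$ such that every $\delta$-average pseudo-orbit of $\mathcal{F}$ is $\epsilon$-shadowed in average by some point of $X$. For $\epsilon>0$ and $x,y\in X$, an $\epsilon$-chain of $\mathcal{F}$ from $x$ to $y$ is a finite sequence $p_0=x,p_1,\dots,p_n=y$ ($n\ge1$) of points of $X$ together with indices $\lambda_0,\dots,\lambda_{n-1}\in\Lambda$ such that $d(f_{\lambda_i}(p_i),p_{i+1})\le\epsilon$ for all $i$. A point $x$ is chain recurrent for $\mathcal{F}$ if for every $\epsilon>0$ there is an $\epsilon$-chain from $x$ to $x$. *)

theory Defs
  imports "HOL-Analysis.Analysis" "HOL-Library.Liminf_Limsup"
begin

fun ifs_comp :: "('l \<Rightarrow> 'a \<Rightarrow> 'a) \<Rightarrow> (nat \<Rightarrow> 'l) \<Rightarrow> nat \<Rightarrow> 'a \<Rightarrow> 'a" where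
  "ifs_comp f \<sigma> 0 = id"
| "ifs_comp f \<sigma> (Suc n) = f (\<sigma> n) \<circ> ifs_comp f \<sigma> n"

definition avg_pseudo_orbit ::
  "'a::metric_space set \<Rightarrow> 'l set \<Rightarrow> ('l \<Rightarrow> 'a \<Rightarrow> 'a) \<Rightarrow> real \<Rightarrow> (nat \<Rightarrow> 'a) \<Rightarrow> bool" where
  "avg_pseudo_orbit X L f \<delta> x \<longleftrightarrow> (\<forall>i. x i \<in> X) \<and>
     (\<exists>N::nat. \<exists>\<sigma>. (\<forall>i. \<sigma> i \<in> L) \<and>
        (\<forall>n\<ge>N. n \<ge> 1 \<longrightarrow> (\<Sum>i<n. dist (f (\<sigma> i) (x i)) (x (Suc i))) / real n < \<delta>))"

definition avg_shadowed ::
  "'a::metric_space set \<Rightarrow> 'l set \<Rightarrow> ('l \<Rightarrow> 'a \<Rightarrow> 'a) \<Rightarrow> real \<Rightarrow> (nat \<Rightarrow> 'a) \<Rightarrow> 'a \<Rightarrow> bool" where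
  "avg_shadowed X L f \<epsilon> x z \<longleftrightarrow> (\<exists>\<sigma>. (\<forall>i. \<sigma> i \<in> L) \<and>
     limsup (\<lambda>n. ereal ((\<Sum>i<n. dist (ifs_comp f \<sigma> i z) (x i)) / real n)) < ereal \<epsilon>)"

definition average_shadowing ::
  "'a::metric_space set \<Rightarrow> 'l set \<Rightarrow> ('l \<Rightarrow> 'a \<Rightarrow> 'a) \<Rightarrow> bool" where
  "average_shadowing X L f \<longleftrightarrow> (\<forall>\<epsilon>>0. \<exists>\<delta>>0. \<forall>x. avg_pseudo_orbit X L f \<delta> x \<longrightarrow>
      (\<exists>z\<in>X. avg_shadowed X L f \<epsilon> x z))"

definition ifs_chain ::
  "'a::metric_space set \<Rightarrow> 'l set \<Rightarrow> ('l \<Rightarrow> 'a \<Rightarrow> 'a) \<Rightarrow> real \<Rightarrow> 'a \<Rightarrow> 'a \<Rightarrow> bool" where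
  "ifs_chain X L f \<epsilon> x y \<longleftrightarrow> (\<exists>n\<ge>1. \<exists>p::nat \<Rightarrow> 'a. \<exists>idx::nat \<Rightarrow> 'l.
      p 0 = x \<and> p n = y \<and> (\<forall>i\<le>n. p i \<in> X) \<and>
      (\<forall>i<n. idx i \<in> L \<and> dist (f (idx i) (p i)) (p (Suc i)) \<le> \<epsilon>))"

definition chain_recurrent ::
  "'a::metric_space set \<Rightarrow> 'l set \<Rightarrow> ('l \<Rightarrow> 'a \<Rightarrow> 'a) \<Rightarrow> 'a \<Rightarrow> bool" where
  "chain_recurrent X L f x \<longleftrightarrow> (\<forall>\<epsilon>>0. ifs_chain X L f \<epsilon> x x)"

end

theory Submission
  imports Defs
begin

text \<open>Fix an index l whose map is onto X. Given x and y, concatenate blocks of length m that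
  alternately follow the forward f_l-orbit of x and a backward f_l-orbit ending at y. Jumps occur
  only at block ends and are bounded by the diameter of X, so for large m this is a
  \<delta>-average pseudo-orbit. A point shadowing it within \<epsilon>/4 on average must be \<epsilon>-close to it at
  some time in a forward block and at a later time in a backward block; the true orbit between
  these two times, prefixed by the orbit of x and followed by the backward orbit to y, is an
  \<epsilon>-chain from x to y. Continuity of the maps and finiteness of the index set are not needed.\<close>

definition ifs_orbit_segment ::
  "'a set \<Rightarrow> 'l set \<Rightarrow> ('l \<Rightarrow> 'a \<Rightarrow> 'a) \<Rightarrow> (nat \<Rightarrow> 'a) \<Rightarrow> nat \<Rightarrow> bool" where
  "ifs_orbit_segment X L f q n \<longleftrightarrow>
     (\<forall>t\<le>n. q t \<in> X) \<and> (\<forall>t<n. \<exists>l\<in>L. f l (q t) = q (Suc t))"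

lemma ifs_comp_in:
  assumes "z \<in> X" "\<forall>i. \<sigma> i \<in> L" "\<forall>l\<in>L. f l ` X \<subseteq> X"
  shows "ifs_comp f \<sigma> n z \<in> X"
  using assms by (induction n) auto

lemma ifs_orbit_segment_ifs_comp:
  assumes "z \<in> X" "\<forall>i. \<sigma> i \<in> L" "\<forall>l\<in>L. f l ` X \<subseteq> X"
  shows "ifs_orbit_segment X L f (\<lambda>t. ifs_comp f \<sigma> (k + t) z) n"
  using assms ifs_comp_in[OF assms] unfolding ifs_orbit_segment_def by auto

lemma ifs_orbit_segment_reverse:
  assumes "\<And>k. v k \<in> X" "l \<in> L" "\<And>k. f l (v (Suc k)) = v k"
  shows "ifs_orbit_segment X L f (\<lambda>t. v (n - t)) n"
  unfolding ifs_orbit_segment_def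
proof (intro conjI allI impI)
  fix t assume "t < n"
  then have "n - t = Suc (n - Suc t)" by simp
  then show "\<exists>l\<in>L. f l (v (n - t)) = v (n - Suc t)" using assms(2,3) by metis
qed (use assms(1) in auto)

lemma ifs_chainI:
  assumes "n \<ge> 1" "p 0 = u" "p n = v" "\<And>i. i \<le> n \<Longrightarrow> p i \<in> X"
    and "\<And>i. i < n \<Longrightarrow> idx i \<in> L \<and> dist (f (idx i) (p i)) (p (Suc i)) \<le> e"
  shows "ifs_chain X L f e u v"
  unfolding ifs_chain_def using assms by blast

lemma ifs_chainE:
  assumes "ifs_chain X L f e u v"
  obtains n p idx where "n \<ge> 1" "p 0 = u" "p n = v" "\<And>i. i \<le> n \<Longrightarrow> p i \<in> X"
    and "\<And>i. i < n \<Longrightarrow> idx i \<in> L \<and> dist (f (idx i) (p i)) (p (Suc i)) \<le> e"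
  using assms unfolding ifs_chain_def by blast

lemma ifs_chain_nonneg: "ifs_chain X L f e u v \<Longrightarrow> e \<ge> 0"
  by (elim ifs_chainE) (meson less_le_trans not_one_le_zero not_le zero_le_dist order_trans)

lemma ifs_chain_step:
  assumes "u \<in> X" "w \<in> X" "l \<in> L" "dist (f l u) w \<le> e"
  shows "ifs_chain X L f e u w"
  using assms
  by (intro ifs_chainI[of 1 "\<lambda>t. if t = 0 then u else w" _ _ _ "\<lambda>_. l"]) (auto simp: le_Suc_eq)

lemma ifs_chain_trans:
  assumes "ifs_chain X L f e u v" "ifs_chain X L f e v w"
  shows "ifs_chain X L f e u w"
proof -
  obtain n1 p1 i1 where first: "n1 \<ge> 1" "p1 0 = u" "p1 n1 = v" "\<And>i. i \<le> n1 \<Longrightarrow> p1 i \<in> X"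
    "\<And>i. i < n1 \<Longrightarrow> i1 i \<in> L \<and> dist (f (i1 i) (p1 i)) (p1 (Suc i)) \<le> e"
    using assms(1) by (elim ifs_chainE) blast
  obtain n2 p2 i2 where second: "n2 \<ge> 1" "p2 0 = v" "p2 n2 = w" "\<And>i. i \<le> n2 \<Longrightarrow> p2 i \<in> X"
    "\<And>i. i < n2 \<Longrightarrow> i2 i \<in> L \<and> dist (f (i2 i) (p2 i)) (p2 (Suc i)) \<le> e"
    using assms(2) by (elim ifs_chainE) blast
  define p where "p t = (if t \<le> n1 then p1 t else p2 (t - n1))" for t
  define idx where "idx t = (if t < n1 then i1 t else i2 (t - n1))" for t
  show ?thesis
  proof (rule ifs_chainI[of "n1 + n2" p _ _ _ idx])
    show "p i \<in> X" if "i \<le> n1 + n2" for i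
      using that first(4) second(4)[of "i - n1"] by (auto simp: p_def)
    show "idx i \<in> L \<and> dist (f (idx i) (p i)) (p (Suc i)) \<le> e" if "i < n1 + n2" for i
    proof (cases "i < n1")
      case True
      then show ?thesis using first(5)[of i] by (simp add: p_def idx_def)
    next
      case False
      then have "Suc i - n1 = Suc (i - n1)" "i - n1 < n2" using that by auto
      then show ?thesis
        using False second(5)[of "i - n1"] first(3) second(2) by (auto simp: p_def idx_def)
    qed
  qed (use first second in \<open>auto simp: p_def\<close>)
qed

lemma ifs_chain_of_orbit_segment:
  assumes "ifs_orbit_segment X L f q n" "n \<ge> 1" "e \<ge> 0"
  shows "ifs_chain X L f e (q 0) (q n)"
proof -
  obtain idx where "\<forall>t<n. idx t \<in> L \<and> f (idx t) (q t) = q (Suc t)"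
    using assms(1) unfolding ifs_orbit_segment_def by metis
  then show ?thesis
    using assms unfolding ifs_orbit_segment_def by (intro ifs_chainI[of n q _ _ _ idx]) auto
qed

lemma ifs_chain_orbit_segment_step:
  assumes "ifs_orbit_segment X L f q n" "w \<in> X" "l \<in> L" "dist (f l (q n)) w \<le> e"
  shows "ifs_chain X L f e (q 0) w"
proof -
  have "q n \<in> X" "q 0 \<in> X" using assms(1) unfolding ifs_orbit_segment_def by auto
  have step: "ifs_chain X L f e (q n) w" using \<open>q n \<in> X\<close> assms(2-4) by (rule ifs_chain_step)
  show ?thesis
  proof (cases "n = 0")
    case False
    then have "ifs_chain X L f e (q 0) (q n)"
      using assms(1) ifs_chain_nonneg[OF step] by (intro ifs_chain_of_orbit_segment) auto
    then show ?thesis using step by (rule ifs_chain_trans)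
  qed (use step in simp)
qed

lemma ifs_chain_append_orbit_segment:
  assumes "ifs_chain X L f e u (q 0)" "ifs_orbit_segment X L f q n"
  shows "ifs_chain X L f e u (q n)"
proof (cases "n = 0")
  case False
  then have "ifs_chain X L f e (q 0) (q n)"
    using assms ifs_chain_nonneg by (intro ifs_chain_of_orbit_segment) auto
  with assms(1) show ?thesis by (rule ifs_chain_trans)
qed (use assms in simp)

definition shuttle :: "nat \<Rightarrow> (nat \<Rightarrow> 'a) \<Rightarrow> (nat \<Rightarrow> 'a) \<Rightarrow> nat \<Rightarrow> 'a" where
  "shuttle m u v i = (if even (i div m) then u (i mod m) else v (m - 1 - i mod m))"

lemma shuttle_step:
  assumes "\<And>t. g (u t) = u (Suc t)" "\<And>t. g (v (Suc t)) = v t" "\<not> m dvd Suc i"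
  shows "g (shuttle m u v i) = shuttle m u v (Suc i)"
proof (cases "m = 0")
  case False
  have "Suc (i mod m) \<noteq> m"
    using assms(3) by (metis dvd_eq_mod_eq_0 mod_Suc)
  then have in_block: "Suc (i mod m) < m"
    using False by (metis Suc_lessI mod_less_divisor neq0_conv)
  then have "Suc i div m = i div m" "Suc i mod m = Suc (i mod m)"
    by (simp_all add: div_Suc mod_Suc)
  moreover have "m - 1 - i mod m = Suc (m - 1 - Suc (i mod m))"
    using in_block by linarith
  ultimately show ?thesis using assms(1,2) by (simp add: shuttle_def)
qed (simp add: shuttle_def assms(1))

lemma avg_pseudo_orbit_sparse_jumps:
  assumes "\<And>i. s i \<in> X" "l \<in> L" "m > 0" "D < real m * \<delta>"
    and exact: "\<And>i. \<not> m dvd Suc i \<Longrightarrow> f l (s i) = s (Suc i)"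
    and jump: "\<And>i. dist (f l (s i)) (s (Suc i)) \<le> D"
  shows "avg_pseudo_orbit X L f \<delta> s"
proof -
  have "0 \<le> D" using jump[of 0] zero_le_dist order_trans by blast
  have err_sum: "(\<Sum>i<n. dist (f l (s i)) (s (Suc i))) \<le> D * real (n div m)" for n
  proof (induction n)
    case (Suc n)
    have "dist (f l (s n)) (s (Suc n)) \<le> (if m dvd Suc n then D else 0)"
      using exact[of n] jump[of n] by auto
    moreover have "Suc n div m = (if m dvd Suc n then Suc (n div m) else n div m)"
      using \<open>m > 0\<close> by (simp add: div_Suc dvd_eq_mod_eq_0 mod_Suc split: if_splits)
    ultimately show ?case using Suc by (cases "m dvd Suc n") (simp_all add: algebra_simps)
  qed simp
  have "(\<Sum>i<n. dist (f l (s i)) (s (Suc i))) / real n < \<delta>" if "n \<ge> 1" for n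
  proof -
    have "n div m * m \<le> n" by simp
    then have "real (n div m) * real m \<le> real n"
      by (metis of_nat_le_iff of_nat_mult)
    then have "D * real (n div m) / real n \<le> D / real m"
      using \<open>0 \<le> D\<close> \<open>m > 0\<close> that
      by (simp add: divide_simps) (metis mult.assoc mult.commute mult_left_mono)
    also have "\<dots> < \<delta>" using assms(3,4) by (simp add: divide_simps mult.commute)
    finally show ?thesis
      using divide_right_mono[OF err_sum[of n], of "real n"] by simp
  qed
  then show ?thesis
    unfolding avg_pseudo_orbit_def using assms(1,2) by (auto intro!: exI[of _ "\<lambda>_. l"])
qed

lemma sum_shifted_blocks_le:
  fixes d :: "nat \<Rightarrow> real"
  assumes "\<And>i. d i \<ge> 0" "sh \<le> m"
  shows "(\<Sum>k<K. \<Sum>c<m. d (2*m*k + sh + c)) \<le> (\<Sum>i<2*m*K. d i)"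
proof (induction K)
  case (Suc K)
  have "(\<Sum>c<m. d (2*m*K + sh + c)) = (\<Sum>i\<in>{2*m*K+sh..<2*m*K+sh+m}. d i)"
    using sum.atLeastLessThan_shift_0[of d "2*m*K + sh" "2*m*K + sh + m"]
    by (simp add: atLeast0LessThan comp_def)
  also have "\<dots> \<le> (\<Sum>i\<in>{2*m*K..<2*m*Suc K}. d i)"
    using assms by (intro sum_mono2) auto
  also have "(\<Sum>i<2*m*K. d i) + \<dots> = (\<Sum>i<2*m*Suc K. d i)"
    by (simp add: lessThan_atLeast0 sum.atLeastLessThan_concat)
  finally show ?case using Suc by simp
qed simp

lemma small_in_late_blocks:
  fixes d :: "nat \<Rightarrow> real"
  assumes d_nonneg: "\<And>i. d i \<ge> 0" and "m > 0" "sh \<le> m"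
    and avg: "eventually (\<lambda>n. (\<Sum>i<n. d i) / real n < \<epsilon> / 4) sequentially"
  shows "\<exists>k\<ge>N. \<exists>c<m. d (2*m*k + sh + c) < \<epsilon>"
proof (rule ccontr)
  assume "\<not> ?thesis"
  then have "\<epsilon> \<le> d (2*m*k + sh + c)" if "k \<ge> N" "c < m" for k c
    using that by (meson not_less)
  then have "(\<Sum>c<m. \<epsilon>) \<le> (\<Sum>c<m. d (2*m*k + sh + c))" if "k \<ge> N" for k
    using that by (intro sum_mono) simp
  then have big: "real m * \<epsilon> \<le> (\<Sum>c<m. d (2*m*k + sh + c))" if "k \<ge> N" for k
    using that by simp
  obtain N0 where N0: "\<And>n. n \<ge> N0 \<Longrightarrow> (\<Sum>i<n. d i) / real n < \<epsilon> / 4"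
    using avg unfolding eventually_sequentially by blast
  define K where "K = max N N0 + 1"
  define n where "n = 2*m*(2*K)"
  \<comment> \<open>The blocks with index in [K, 2K) alone already contribute \<epsilon>/4 times the length n.\<close>
  have "real K * (real m * \<epsilon>) = (\<Sum>k\<in>{K..<2*K}. real m * \<epsilon>)" by simp
  also have "\<dots> \<le> (\<Sum>k\<in>{K..<2*K}. \<Sum>c<m. d (2*m*k + sh + c))"
    by (intro sum_mono big) (auto simp: K_def)
  also have "\<dots> \<le> (\<Sum>k<2*K. \<Sum>c<m. d (2*m*k + sh + c))"
    using d_nonneg by (intro sum_mono2) (auto intro: sum_nonneg)
  also have "\<dots> \<le> (\<Sum>i<n. d i)"
    unfolding n_def using d_nonneg \<open>sh \<le> m\<close> by (rule sum_shifted_blocks_le)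
  finally have lower: "real K * (real m * \<epsilon>) \<le> (\<Sum>i<n. d i)" .
  have "K \<le> m * K" using \<open>m > 0\<close> by simp
  then have "n \<ge> N0" "n > 0" using \<open>m > 0\<close> by (auto simp: n_def K_def)
  then have "(\<Sum>i<n. d i) < \<epsilon> / 4 * real n"
    using N0[of n] by (simp only: pos_divide_less_eq of_nat_0_less_iff)
  also have "\<dots> = real K * (real m * \<epsilon>)" by (simp add: n_def)
  finally show False using lower by simp
qed

lemma avg_shadowed_close_in_even_and_odd_blocks:
  assumes "avg_shadowed X L f (\<epsilon> / 4) s z" "m > 0"
  obtains \<sigma> i j where "\<forall>k. \<sigma> k \<in> L" "i < j" "even (i div m)" "odd (j div m)"
    "dist (ifs_comp f \<sigma> i z) (s i) \<le> \<epsilon>" "dist (ifs_comp f \<sigma> j z) (s j) \<le> \<epsilon>"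
proof -
  obtain \<sigma> where \<sigma>: "\<forall>k. \<sigma> k \<in> L" and
    limsup: "limsup (\<lambda>n. ereal ((\<Sum>i<n. dist (ifs_comp f \<sigma> i z) (s i)) / real n)) < ereal (\<epsilon> / 4)"
    using assms(1) unfolding avg_shadowed_def by blast
  define d where "d i = dist (ifs_comp f \<sigma> i z) (s i)" for i
  have avg: "eventually (\<lambda>n. (\<Sum>i<n. d i) / real n < \<epsilon> / 4) sequentially"
    using Limsup_lessD[OF limsup] unfolding d_def by simp
  have block_div: "(q*m + c) div m = q" if "c < m" for q c
    using that by simp
  obtain k c where c: "c < m" "d (2*m*k + 0 + c) < \<epsilon>"
    using small_in_late_blocks[of d m 0 \<epsilon> 0] avg assms(2) by (auto simp: d_def)
  define i where "i = 2*m*k + c"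
  obtain k' c' where c': "k' \<ge> Suc i" "c' < m" "d (2*m*k' + m + c') < \<epsilon>"
    using small_in_late_blocks[of d m m \<epsilon> "Suc i"] avg assms(2) by (auto simp: d_def)
  define j where "j = 2*m*k' + m + c'"
  have "i div m = 2*k" "j div m = 2*k' + 1"
    using block_div[OF c(1), of "2*k"] block_div[OF c'(2), of "2*k' + 1"]
    by (simp_all add: i_def j_def algebra_simps)
  moreover have "i < j"
  proof -
    have "k' \<le> 2*m*k'" using \<open>m > 0\<close> by simp
    then show ?thesis using c'(1) unfolding j_def by linarith
  qed
  ultimately show thesis
    using that \<sigma> c c' by (simp add: d_def i_def j_def)
qed

lemma ifs_chain_through_orbit_segments:
  assumes "l \<in> L" "\<forall>k\<in>L. f k ` X \<subseteq> X" "x \<in> X" "z \<in> X" "\<forall>k. \<sigma> k \<in> L"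
    and "\<And>k. v k \<in> X" "\<And>k. f l (v (Suc k)) = v k" "i < j"
    and "dist (f l (ifs_comp f (\<lambda>_. l) a x)) (ifs_comp f \<sigma> i z) \<le> \<epsilon>"
    and "dist (ifs_comp f \<sigma> j z) (v c) \<le> \<epsilon>"
  shows "ifs_chain X L f \<epsilon> x (v 0)"
proof -
  have z_orbit: "ifs_comp f \<sigma> k z \<in> X" for k
    using assms(4,5,2) by (rule ifs_comp_in)
  have "ifs_orbit_segment X L f (\<lambda>t. ifs_comp f (\<lambda>_. l) (0 + t) x) a"
    using assms(1-3) by (intro ifs_orbit_segment_ifs_comp) auto
  from ifs_chain_orbit_segment_step[OF this z_orbit assms(1)]
  have to_z_orbit: "ifs_chain X L f \<epsilon> x (ifs_comp f \<sigma> i z)" using assms(9) by simp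
  obtain n where "j = i + Suc n" using assms(8) less_iff_Suc_add by auto
  then have "ifs_chain X L f \<epsilon> (ifs_comp f \<sigma> (i + 0) z) (v c)"
    using ifs_orbit_segment_ifs_comp[OF assms(4,5,2)] assms(5,6,10)
    by (intro ifs_chain_orbit_segment_step[of X L f _ n _ "\<sigma> (i + n)"]) simp_all
  then have "ifs_chain X L f \<epsilon> x (v (c - 0))"
    using ifs_chain_trans[OF to_z_orbit] by simp
  from ifs_chain_append_orbit_segment[OF this ifs_orbit_segment_reverse[where v = v and f = f and l = l, OF assms(6,1,7)]]
  show ?thesis by simp
qed

lemma shuttle_avg_pseudo_orbit:
  assumes "bounded X" "l \<in> L" "\<forall>k\<in>L. f k ` X \<subseteq> X" "\<And>t. u t \<in> X" "\<And>t. v t \<in> X"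
    and "\<And>t. f l (u t) = u (Suc t)" "\<And>t. f l (v (Suc t)) = v t"
    and "m > 0" "diameter X < real m * \<delta>"
  shows "avg_pseudo_orbit X L f \<delta> (shuttle m u v)"
proof -
  have shuttle_in: "\<And>i. shuttle m u v i \<in> X" by (simp add: shuttle_def assms(4,5))
  show ?thesis
  proof (rule avg_pseudo_orbit_sparse_jumps[OF shuttle_in assms(2,8,9)])
    show "f l (shuttle m u v i) = shuttle m u v (Suc i)" if "\<not> m dvd Suc i" for i
      using assms(6,7) that by (rule shuttle_step)
    show "dist (f l (shuttle m u v i)) (shuttle m u v (Suc i)) \<le> diameter X" for i
      using assms(1-3) shuttle_in by (intro diameter_bounded_bound) auto
  qed
qed

lemma ifs_chain_of_average_shadowing:
  assumes "bounded X" "l \<in> L" "\<forall>k\<in>L. f k ` X \<subseteq> X" "X \<subseteq> f l ` X"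
    and "average_shadowing X L f" "x \<in> X" "y \<in> X" "\<epsilon> > 0"
  shows "ifs_chain X L f \<epsilon> x y"
proof -
  obtain g where g: "\<And>w. w \<in> X \<Longrightarrow> g w \<in> X \<and> f l (g w) = w"
    using bchoice[of X "\<lambda>w w'. w' \<in> X \<and> f l w' = w"] assms(4) by blast
  define v where "v k = (g ^^ k) y" for k
  have vX: "\<And>k. v k \<in> X" by (induct_tac k) (simp_all add: v_def assms(7) g)
  have v_step: "\<And>k. f l (v (Suc k)) = v k" using vX g by (simp add: v_def)
  define u where "u t = ifs_comp f (\<lambda>_. l) (Suc t) x" for t
  have uX: "\<And>t. u t \<in> X" unfolding u_def using assms(2,3,6) by (intro ifs_comp_in) auto
  have "\<epsilon> / 4 > 0" using assms(8) by simp
  then obtain \<delta> where "\<delta> > 0" and shadow: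
    "\<And>s. avg_pseudo_orbit X L f \<delta> s \<Longrightarrow> \<exists>z\<in>X. avg_shadowed X L f (\<epsilon> / 4) s z"
    using assms(5) unfolding average_shadowing_def by blast
  obtain m0 :: nat where "diameter X / \<delta> < m0" using reals_Archimedean2 by blast
  define m where "m = Suc m0"
  have "m > 0" "diameter X < real m * \<delta>"
    using \<open>diameter X / \<delta> < m0\<close> \<open>\<delta> > 0\<close> by (simp_all add: m_def pos_divide_less_eq algebra_simps)
  define s where "s = shuttle m u v"
  have "avg_pseudo_orbit X L f \<delta> s"
    unfolding s_def using assms(1-3) uX vX v_step \<open>m > 0\<close> \<open>diameter X < real m * \<delta>\<close>
    by (intro shuttle_avg_pseudo_orbit) (simp_all add: u_def)
  then obtain z where "z \<in> X" and "avg_shadowed X L f (\<epsilon> / 4) s z"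
    using shadow by blast
  then obtain \<sigma> i j where "\<forall>k. \<sigma> k \<in> L" "i < j" "even (i div m)" "odd (j div m)"
    and close: "dist (ifs_comp f \<sigma> i z) (s i) \<le> \<epsilon>" "dist (ifs_comp f \<sigma> j z) (s j) \<le> \<epsilon>"
    using avg_shadowed_close_in_even_and_odd_blocks[OF _ \<open>m > 0\<close>] by blast
  moreover have "dist (f l (ifs_comp f (\<lambda>_. l) (i mod m) x)) (ifs_comp f \<sigma> i z) \<le> \<epsilon>"
    "dist (ifs_comp f \<sigma> j z) (v (m - 1 - j mod m)) \<le> \<epsilon>"
    using close \<open>even (i div m)\<close> \<open>odd (j div m)\<close> by (simp_all add: s_def shuttle_def u_def dist_commute)
  ultimately have "ifs_chain X L f \<epsilon> x (v 0)"
    using assms(2,3,6) \<open>z \<in> X\<close> vX v_step by (intro ifs_chain_through_orbit_segments) auto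
  then show ?thesis by (simp add: v_def)
qed

theorem mainTheorem6:
  fixes X :: "'a::metric_space set" and L :: "'l set" and f :: "'l \<Rightarrow> 'a \<Rightarrow> 'a"
  assumes "compact X"
    and "finite L" and "L \<noteq> {}"
    and "\<And>l. l \<in> L \<Longrightarrow> continuous_on X (f l)"
    and "\<And>l. l \<in> L \<Longrightarrow> f l ` X = X"
    and "average_shadowing X L f"
  shows "(\<forall>x\<in>X. chain_recurrent X L f x) \<and>
         (\<forall>x\<in>X. \<forall>y\<in>X. \<forall>\<epsilon>>0. ifs_chain X L f \<epsilon> x y)"
proof -
  obtain l where "l \<in> L" using assms(3) by blast
  have "ifs_chain X L f \<epsilon> x y" if "x \<in> X" "y \<in> X" "\<epsilon> > 0" for x y \<epsilon>
    using compact_imp_bounded[OF assms(1)] \<open>l \<in> L\<close> assms(5,6) that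
    by (intro ifs_chain_of_average_shadowing) auto
  then show ?thesis unfolding chain_recurrent_def by blast
qed

end
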